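(* Fix parameters $\alpha\in[0,1)$, $\beta\ge 0$, $q>0$, a positive function $u(t)>0$ (the study-session intensity), a constant $d>0$ with $d\neq 1$, and arbitrary constants $c_1,c_2\in\mathbb{R}$. For state variables $m\in[0,1]$, $n>0$, $\Delta\ge 0$ and time $t$, set $$B_d(m)=c_2\frac{\log d}{-m^2+2m-d}-c_2\frac{\log d}{1-d}+c_1\, m\log\!\Big(\frac{1+\beta}{1-\alpha}\Big)-c_1\log(1+\beta),$$ $$g_d(m,n)=\sqrt{\tfrac{u(t)}{2}}\,\big[B_d(m)\big]_+,\qquad h_d(m,n,\Delta)=-\sqrt{q}\,\frac{m\,n}{1+\Delta}\,c_2\,\frac{(-2m+2)\log d}{(-m^2+2m-d)^2},$$ and define the loss $$\ell_d(m,n,\Delta,p)=h_d(m,n,\Delta)+g_d^2(m,n)+\tfrac12\, q\, p^2 u(t).$$ Let $$J_d(m,n,\Delta,t)=\sqrt{q}\Big(c_1\log n+c_2\frac{\log d}{-m^2+2m-d}\Big).$$ Then $\partial J_d/\partial t=0$, $\partial J_d/\partial \Delta=0$, $\partial J_d/\partial m=-\sqrt{q}\,c_2\frac{(-2m+2)\log d}{(-m^2+2m-d)^2}$, and at every point $(m,n,\Delta,t)$ with $m\in[0,1]$, $n>0$, $\Delta\ge0$ and $-m^2+2m-d\neq 0$, the function $J=J_d$ satisfies the Hamilton–Jacobi–Bellman equation $$0=J_t(m,n,\Delta,t)-\frac{n\,m}{1+\Delta}J_m(m,n,\Delta,t)+J_\Delta(m,n,\Delta,t)+\min_{p\ge 0}\Big\{\ell_d(m,n,\Delta,p)+\big[J(1,(1-\alpha)n,0,t)\,m+J(1,(1+\beta)n,0,t)\,(1-m)-J(m,n,\Delta,t)\big]\,p\,u(t)\Big\},$$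 and the minimizing (optimal) selection probability is $$p^*_d=q^{-1/2}\big[B_d(m)\big]_+ .$$
   Context: This arises from a stochastic optimal control model of a learner reviewing one question: $m$ is the probability of recalling the answer, $n$ is the forgetting rate, $\Delta$ is the time since the last review, $p$ is the probability that the question is selected in a study session, and $u(t)$ is the (given, uncontrolled) rate of study sessions. At a review, the state jumps to $m=1$, $\Delta=0$, and $n\mapsto(1-\alpha)n$ on a successful recall (probability $m$) or $n\mapsto(1+\beta)n$ on an unsuccessful recall (probability $1-m$); between reviews $dm=-\frac{nm}{1+\Delta}dt$ and $d\Delta=dt$. Notation: $[x]_+=\max(x,0)$; $J_t,J_m,J_\Delta$ denote partial derivatives of $J$ with respect to $t,m,\Delta$. *)

theory Defs
  imports "HOL-Analysis.Analysis"
begin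

definition den :: "real \<Rightarrow> real \<Rightarrow> real" where
  "den d m = - (m^2) + 2*m - d"

definition Bd :: "real \<Rightarrow> real \<Rightarrow> real \<Rightarrow> real \<Rightarrow> real \<Rightarrow> real \<Rightarrow> real" where
  "Bd \<alpha> \<beta> d c1 c2 m =
     c2 * ln d / den d m - c2 * ln d / (1 - d)
     + c1 * m * ln ((1 + \<beta>) / (1 - \<alpha>)) - c1 * ln (1 + \<beta>)"

definition gd :: "real \<Rightarrow> real \<Rightarrow> (real \<Rightarrow> real) \<Rightarrow> real \<Rightarrow> real \<Rightarrow> real \<Rightarrow> real
                   \<Rightarrow> real \<Rightarrow> real \<Rightarrow> real" where
  "gd \<alpha> \<beta> u d c1 c2 m n t = sqrt (u t / 2) * max (Bd \<alpha> \<beta> d c1 c2 m) 0"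

definition hd :: "real \<Rightarrow> real \<Rightarrow> real \<Rightarrow> real \<Rightarrow> real \<Rightarrow> real \<Rightarrow> real" where
  "hd q d c2 m n \<Delta> =
     - sqrt q * (m * n / (1 + \<Delta>)) * c2 * ((- 2 * m + 2) * ln d / (den d m)^2)"

definition lossd :: "real \<Rightarrow> real \<Rightarrow> real \<Rightarrow> (real \<Rightarrow> real) \<Rightarrow> real \<Rightarrow> real \<Rightarrow> real
                      \<Rightarrow> real \<Rightarrow> real \<Rightarrow> real \<Rightarrow> real \<Rightarrow> real \<Rightarrow> real" where
  "lossd \<alpha> \<beta> q u d c1 c2 m n \<Delta> p t =
     hd q d c2 m n \<Delta> + (gd \<alpha> \<beta> u d c1 c2 m n t)^2 + 1/2 * q * p^2 * u t"

definition Jd :: "real \<Rightarrow> real \<Rightarrow> real \<Rightarrow> real \<Rightarrow> real \<Rightarrow> real \<Rightarrow> real \<Rightarrow> real \<Rightarrow> real" where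
  "Jd q d c1 c2 m n \<Delta> t = sqrt q * (c1 * ln n + c2 * ln d / den d m)"

end

theory Submission
  imports Defs
begin

text \<open>
  J depends neither on t nor on Delta, and the running cost h_d equals the transport term
  nm/(1+Delta) J_m, so the HJB equation says that the minimum over p \<ge> 0 of the remaining part of
  the Hamiltonian is 0. The jump term J(1,(1-alpha)n,0,t) m + J(1,(1+beta)n,0,t) (1-m) - J(m,n,Delta,t)
  equals -sqrt q B with B = B_d(m), and since g_d^2 = u/2 [B]_+^2 that remaining part completes to
  u/2 ((sqrt q p - [B]_+)^2 + 2 sqrt q p ([B]_+ - B)): two terms that are nonnegative for p \<ge> 0 and
  vanish together exactly at p = [B]_+ / sqrt q.
\<close>

lemma shifted_quadratic_unique_min_pos_part:
  fixes a s B c :: real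
  assumes "0 < a" "0 < s"
  defines "f \<equiv> \<lambda>p. c + a * ((s * p - max B 0)^2 + 2 * s * p * (max B 0 - B))"
    and "p0 \<equiv> 1 / s * max B 0"
  shows "0 \<le> p0" and "f p0 = c" and "\<forall>p\<ge>0. c \<le> f p"
    and "\<forall>p\<ge>0. f p = c \<longrightarrow> p = p0" and "(INF p\<in>{0..}. f p) = c"
proof -
  have s_p0: "s * p0 = max B 0"
    using assms(2) by (simp add: p0_def)
  show p0_nonneg: "0 \<le> p0"
    using assms(2) by (simp add: p0_def)
  show at_p0: "f p0 = c"
    using s_p0 by (cases "0 \<le> B") (auto simp: f_def)
  have terms_nonneg: "0 \<le> 2 * s * p * (max B 0 - B)" if "0 \<le> p" for p
    using assms(2) that by simp
  show lower: "\<forall>p\<ge>0. c \<le> f p"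
    using assms(1) terms_nonneg by (auto simp: f_def)
  show "\<forall>p\<ge>0. f p = c \<longrightarrow> p = p0"
  proof (intro allI impI)
    fix p :: real
    assume "0 \<le> p" and "f p = c"
    then have "(s * p - max B 0)^2 + 2 * s * p * (max B 0 - B) = 0"
      using assms(1) by (simp add: f_def)
    with terms_nonneg[OF \<open>0 \<le> p\<close>] have "(s * p - max B 0)^2 = 0"
      by (simp add: add_nonneg_eq_0_iff)
    then have "s * p = s * p0"
      using s_p0 by simp
    then show "p = p0"
      using assms(2) by simp
  qed
  show "(INF p\<in>{0..}. f p) = c"
    unfolding at_p0[symmetric] by (rule cInf_eq_minimum) (use p0_nonneg lower at_p0 in auto)
qed

lemma has_real_derivative_den: "(den d has_real_derivative - 2 * m + 2) (at m)"
  unfolding den_def by (auto intro!: derivative_eq_intros)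

lemma has_real_derivative_Jd_m:
  assumes "den d m \<noteq> 0"
  shows "((\<lambda>m'. Jd q d c1 c2 m' n \<Delta> t) has_real_derivative
            - sqrt q * c2 * ((- 2 * m + 2) * ln d / (den d m)^2)) (at m)"
  unfolding Jd_def using assms
  by (auto intro!: derivative_eq_intros has_real_derivative_den simp: power2_eq_square)

lemma Jd_jump_eq_Bd:
  assumes "\<alpha> < 1" "- 1 < \<beta>" "0 < n" "d \<noteq> 1"
  shows "Jd q d c1 c2 1 ((1 - \<alpha>) * n) 0 t * m + Jd q d c1 c2 1 ((1 + \<beta>) * n) 0 t * (1 - m)
           - Jd q d c1 c2 m n \<Delta> t = - sqrt q * Bd \<alpha> \<beta> d c1 c2 m"
proof -
  have ln_eqs: "ln ((1 - \<alpha>) * n) = ln (1 - \<alpha>) + ln n" "ln ((1 + \<beta>) * n) = ln (1 + \<beta>) + ln n"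
       "ln ((1 + \<beta>) / (1 - \<alpha>)) = ln (1 + \<beta>) - ln (1 - \<alpha>)"
    using assms(1-3) by (simp_all add: ln_mult ln_div)
  have "den d 1 = 1 - d"
    by (simp add: den_def)
  then show ?thesis
    unfolding Jd_def Bd_def ln_eqs by (simp add: algebra_simps add_divide_distrib[symmetric])
qed

lemma gd_squared:
  assumes "0 \<le> u t"
  shows "(gd \<alpha> \<beta> u d c1 c2 m n t)^2 = u t / 2 * (max (Bd \<alpha> \<beta> d c1 c2 m) 0)^2"
  using assms by (simp add: gd_def power_mult_distrib)

lemma lossd_plus_jump_complete_square:
  fixes \<alpha> \<beta> q d c1 c2 m :: real
  assumes "0 < q" "0 \<le> u t"
  defines "B \<equiv> Bd \<alpha> \<beta> d c1 c2 m"
  shows "lossd \<alpha> \<beta> q u d c1 c2 m n \<Delta> p t + (- sqrt q * B) * p * u t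
           = hd q d c2 m n \<Delta>
             + u t / 2 * ((sqrt q * p - max B 0)^2 + 2 * sqrt q * p * (max B 0 - B))"
  unfolding lossd_def gd_squared[where u = u and t = t, OF assms(2)]
  using assms by (simp add: algebra_simps power2_eq_square)

theorem lemma2:
  fixes \<alpha> \<beta> q d c1 c2 :: real and u :: "real \<Rightarrow> real"
  assumes "0 \<le> \<alpha>" "\<alpha> < 1" "0 \<le> \<beta>" "0 < q" "\<And>t. 0 < u t"
    and "0 < d" "d \<noteq> 1"
  defines "J \<equiv> Jd q d c1 c2"
  shows "(\<forall>m n \<Delta> t. ((\<lambda>t'. J m n \<Delta> t') has_real_derivative 0) (at t))
    \<and> (\<forall>m n \<Delta> t. ((\<lambda>\<Delta>'. J m n \<Delta>' t) has_real_derivative 0) (at \<Delta>))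
    \<and> (\<forall>m n \<Delta> t. den d m \<noteq> 0 \<longrightarrow>
         ((\<lambda>m'. J m' n \<Delta> t) has_real_derivative
            (- sqrt q * c2 * ((- 2 * m + 2) * ln d / (den d m)^2))) (at m))
    \<and> (\<forall>m n \<Delta> t. 0 \<le> m \<and> m \<le> 1 \<and> 0 < n \<and> 0 \<le> \<Delta> \<and> den d m \<noteq> 0 \<longrightarrow>
        (let F = (\<lambda>p. lossd \<alpha> \<beta> q u d c1 c2 m n \<Delta> p t
                   + (J 1 ((1 - \<alpha>) * n) 0 t * m + J 1 ((1 + \<beta>) * n) 0 t * (1 - m)
                      - J m n \<Delta> t) * p * u t);
             pstar = (1 / sqrt q) * max (Bd \<alpha> \<beta> d c1 c2 m) 0
         in 0 = deriv (\<lambda>t'. J m n \<Delta> t') t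
                - n * m / (1 + \<Delta>) * deriv (\<lambda>m'. J m' n \<Delta> t) m
                + deriv (\<lambda>\<Delta>'. J m n \<Delta>' t) \<Delta>
                + (INF p\<in>{0..}. F p)
          \<and> 0 \<le> pstar \<and> F pstar = (INF p\<in>{0..}. F p)
          \<and> (\<forall>p\<ge>0. F pstar \<le> F p)
          \<and> (\<forall>p\<ge>0. F p = F pstar \<longrightarrow> p = pstar)))"
proof (intro conjI allI impI, goal_cases J_t J_\<Delta> J_m hjb)
  case (J_t m n \<Delta> t)
  show ?case by (simp add: J_def Jd_def)
next
  case (J_\<Delta> m n \<Delta> t)
  show ?case by (simp add: J_def Jd_def)
next
  case (J_m m n \<Delta> t)
  then show ?case unfolding J_def by (rule has_real_derivative_Jd_m)
next
  case (hjb m n \<Delta> t)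
  then have "deriv (\<lambda>m'. J m' n \<Delta> t) m = - sqrt q * c2 * ((- 2 * m + 2) * ln d / (den d m)^2)"
    unfolding J_def by (intro DERIV_imp_deriv has_real_derivative_Jd_m) simp
  then have drift: "n * m / (1 + \<Delta>) * deriv (\<lambda>m'. J m' n \<Delta> t) m = hd q d c2 m n \<Delta>"
    by (simp add: hd_def mult_ac)
  have J_t_J_\<Delta>_zero: "deriv (\<lambda>t'. J m n \<Delta> t') t = 0" "deriv (\<lambda>\<Delta>'. J m n \<Delta>' t) \<Delta> = 0"
    by (simp_all add: J_def Jd_def)
  have jump: "J 1 ((1 - \<alpha>) * n) 0 t * m + J 1 ((1 + \<beta>) * n) 0 t * (1 - m) - J m n \<Delta> t
      = - sqrt q * Bd \<alpha> \<beta> d c1 c2 m"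
    unfolding J_def using assms hjb by (intro Jd_jump_eq_Bd) auto
  have "0 < u t / 2" "0 < sqrt q"
    using assms(4,5) by simp_all
  note min = shifted_quadratic_unique_min_pos_part(1)[OF this]
    shifted_quadratic_unique_min_pos_part(2-5)[where c = "hd q d c2 m n \<Delta>", OF this]
  show ?case
    unfolding Let_def jump J_t_J_\<Delta>_zero
      lossd_plus_jump_complete_square[where u = u and t = t, OF assms(4) less_imp_le[OF assms(5)]]
      min(2,5)
    by (intro conjI) (use drift in linarith, fact min(1), rule refl, fact min(3), fact min(4))
qed

end
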